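(* Let $G$ be a connected bipartite finite simple graph with parts $X$ and $Y$, and let $\mathcal{N}G$ be its normal graph algebra over a field $\mathbb{F}$ of characteristic not $2$. Then $\mathrm{ann}\,G$ is the one-dimensional span $\left\langle \sum_{x\in X}x-\sum_{y\in Y}y\right\rangle$.
   Context: For a finite simple graph $G$ with vertex set $VG$ and edge set $EG$ (edge with endpoints $x,y$ written $[x,y]$), the normal graph algebra $\mathcal{N}G$ is the $\mathbb{F}$-vector space $U_G\oplus\mathfrak{Z}_G$, where $U_G$ has basis $VG$ and $\mathfrak{Z}_G$ has basis $EG$, with commutative bilinear product determined by: for distinct vertices $x,y$, $xy=[x,y]$ if adjacent and $0$ otherwise; $x^2=\sum_{y\sim x}[x,y]$; all products involving an element of $\mathfrak{Z}_G$ are $0$. Equivalently, for $u=\sum_x\theta_x x$, $v=\sum_x\eta_x x$, $uv=\sum_{[x,y]\in EG}(\theta_x+\theta_y)(\eta_x+\eta_y)[x,y]$. The annihilator is $\mathrm{ann}\,G=\{u\in U_G: uv=0\text{ for all }v\in U_G\}$. *)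

theory Defs
  imports Main
begin

text \<open>The edge [x,y] is represented by the
two-element set {x,y}. Elements of U_G are coefficient functions V -> F
(zero outside V); elements of Z_G are coefficient functions on edges.\<close>

definition simple_graph :: "'v set \<Rightarrow> ('v \<Rightarrow> 'v \<Rightarrow> bool) \<Rightarrow> bool" where
  "simple_graph V E \<longleftrightarrow> finite V \<and> (\<forall>x y. E x y \<longrightarrow> x \<in> V \<and> y \<in> V)
     \<and> (\<forall>x y. E x y \<longrightarrow> E y x) \<and> (\<forall>x. \<not> E x x)"

definition graph_connected :: "'v set \<Rightarrow> ('v \<Rightarrow> 'v \<Rightarrow> bool) \<Rightarrow> bool" where
  "graph_connected V E \<longleftrightarrow> V \<noteq> {} \<and> (\<forall>x\<in>V. \<forall>y\<in>V. E\<^sup>*\<^sup>* x y)"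

definition bipartite_parts :: "'v set \<Rightarrow> ('v \<Rightarrow> 'v \<Rightarrow> bool) \<Rightarrow> 'v set \<Rightarrow> 'v set \<Rightarrow> bool" where
  "bipartite_parts V E X Y \<longleftrightarrow> X \<union> Y = V \<and> X \<inter> Y = {}
     \<and> (\<forall>x y. E x y \<longrightarrow> (x \<in> X \<and> y \<in> Y) \<or> (x \<in> Y \<and> y \<in> X))"

definition edge_vec :: "'v \<Rightarrow> 'v \<Rightarrow> 'v set \<Rightarrow> 'a::field" where
  "edge_vec x y = (\<lambda>e. if e = {x, y} then 1 else 0)"

definition vprod :: "'v set \<Rightarrow> ('v \<Rightarrow> 'v \<Rightarrow> bool) \<Rightarrow> 'v \<Rightarrow> 'v \<Rightarrow> 'v set \<Rightarrow> 'a::field" where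
  "vprod V E x y = (if x = y then (\<lambda>e. \<Sum>z\<in>{z\<in>V. E x z}. edge_vec x z e)
                    else if E x y then edge_vec x y else (\<lambda>e. 0))"

definition nga_mult :: "'v set \<Rightarrow> ('v \<Rightarrow> 'v \<Rightarrow> bool) \<Rightarrow> ('v \<Rightarrow> 'a::field) \<Rightarrow> ('v \<Rightarrow> 'a) \<Rightarrow> 'v set \<Rightarrow> 'a" where
  "nga_mult V E u v = (\<lambda>e. \<Sum>x\<in>V. \<Sum>y\<in>V. u x * v y * vprod V E x y e)"

definition U_G :: "'v set \<Rightarrow> ('v \<Rightarrow> 'a::field) set" where
  "U_G V = {u. \<forall>x. x \<notin> V \<longrightarrow> u x = 0}"

definition nga_ann :: "'v set \<Rightarrow> ('v \<Rightarrow> 'v \<Rightarrow> bool) \<Rightarrow> ('v \<Rightarrow> 'a::field) set" where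
  "nga_ann V E = {u \<in> U_G V. \<forall>v \<in> U_G V. nga_mult V E u v = (\<lambda>e. 0)}"

end

theory Submission
  imports Defs
begin

text \<open>Evaluated at an edge {a,b}, the product is uv{a,b} = (u a + u b)(v a + v b) and it
vanishes off the edges. Testing against the basis vector a therefore shows that u lies in
the annihilator iff u a + u b = 0 along every edge. Such a u alternates in sign along edges,
as does the sign function s of the bipartition (1 on X, -1 on Y); hence u w * s w is
constant along walks, so constant on the connected graph, and u = c s since s * s = 1 on V.\<close>

lemma vprod_at_edge:
  assumes g: "simple_graph V E" and ab: "E a b"
  shows "(vprod V E x y {a,b} :: 'a::field) =
    ((if x = a then 1 else 0) + (if x = b then 1 else 0)) *
    ((if y = a then 1 else 0) + (if y = b then 1 else 0))"
proof -
  have neq: "a \<noteq> b" and V: "a \<in> V" "b \<in> V" "E b a" and fin: "finite {z\<in>V. E x z}"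
    using g ab unfolding simple_graph_def by fastforce+
  show ?thesis
  proof (cases "x = y")
    case True
    have "(\<Sum>z\<in>{z\<in>V. E x z}. (edge_vec x z {a,b} :: 'a)) =
          (\<Sum>z\<in>{z\<in>V. E x z}. if z = (if x = a then b else a) then
             (if x = a \<or> x = b then 1 else 0) else 0)"
      using neq by (intro sum.cong) (auto simp: edge_vec_def doubleton_eq_iff)
    also have "\<dots> = (if (if x = a then b else a) \<in> {z\<in>V. E x z} then
                       (if x = a \<or> x = b then 1 else 0) else 0)"
      by (rule sum.delta[OF fin])
    finally show ?thesis using True neq V ab by (auto simp: vprod_def)
  next
    case False
    then show ?thesis using neq V ab by (auto simp: vprod_def edge_vec_def doubleton_eq_iff)
  qed
qed

lemma sum_mult_pair_indicator:
  assumes "finite V" "a \<in> V" "b \<in> V" "a \<noteq> b"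
  shows "(\<Sum>x\<in>V. (u x :: 'a::comm_semiring_1) *
           ((if x = a then 1 else 0) + (if x = b then 1 else 0))) = u a + u b"
proof -
  have "(\<Sum>x\<in>V. u x * ((if x = a then 1 else 0) + (if x = b then 1 else 0))) =
        (\<Sum>x\<in>V. (if x = a then u a else 0) + (if x = b then u b else 0))"
    by (rule sum.cong) (use assms in auto)
  also have "\<dots> = u a + u b" using assms by (simp add: sum.distrib)
  finally show ?thesis .
qed

lemma nga_mult_at_edge:
  assumes g: "simple_graph V E" and ab: "E a b"
  shows "nga_mult V E u v {a,b} = ((u a + u b) * (v a + v b) :: 'a::field)"
proof -
  have neq: "a \<noteq> b" and V: "finite V" "a \<in> V" "b \<in> V"
    using g ab unfolding simple_graph_def by fastforce+
  define f :: "_ \<Rightarrow> 'a" where "f x = (if x = a then 1 else 0) + (if x = b then 1 else 0)" for x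
  have "nga_mult V E u v {a,b} = (\<Sum>x\<in>V. \<Sum>y\<in>V. u x * v y * (f x * f y))"
    unfolding nga_mult_def f_def by (simp add: vprod_at_edge[OF g ab])
  also have "\<dots> = (\<Sum>x\<in>V. u x * f x) * (\<Sum>y\<in>V. v y * f y)"
    by (simp add: sum_product mult_ac)
  also have "\<dots> = (u a + u b) * (v a + v b)"
    unfolding f_def by (simp only: sum_mult_pair_indicator[OF V neq])
  finally show ?thesis .
qed

lemma nga_mult_off_edges:
  assumes "\<nexists>a b. E a b \<and> e = {a,b}"
  shows "nga_mult V E u v e = (0::'a::field)"
proof -
  have "vprod V E x y e = (0::'a)" for x y
    using assms by (auto simp: vprod_def edge_vec_def intro!: sum.neutral)
  then show ?thesis unfolding nga_mult_def by simp
qed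

lemma nga_ann_iff:
  assumes g: "simple_graph V E"
  shows "u \<in> nga_ann V E \<longleftrightarrow> u \<in> U_G V \<and> (\<forall>a b. E a b \<longrightarrow> u a + u b = (0::'a::field))"
proof
  assume u: "u \<in> nga_ann V E"
  have "u a + u b = 0" if ab: "E a b" for a b
  proof -
    have "a \<in> V" "a \<noteq> b" using g ab unfolding simple_graph_def by metis+
    define \<delta> :: "_ \<Rightarrow> 'a" where "\<delta> x = (if x = a then 1 else 0)" for x
    have "\<delta> \<in> U_G V" using \<open>a \<in> V\<close> by (auto simp: U_G_def \<delta>_def)
    then have "nga_mult V E u \<delta> {a,b} = 0" using u unfolding nga_ann_def by auto
    then show ?thesis using nga_mult_at_edge[OF g ab, of u \<delta>] \<open>a \<noteq> b\<close> by (simp add: \<delta>_def)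
  qed
  then show "u \<in> U_G V \<and> (\<forall>a b. E a b \<longrightarrow> u a + u b = 0)"
    using u unfolding nga_ann_def by auto
next
  assume u: "u \<in> U_G V \<and> (\<forall>a b. E a b \<longrightarrow> u a + u b = 0)"
  have "nga_mult V E u v e = 0" for v e
  proof (cases "\<exists>a b. E a b \<and> e = {a,b}")
    case True
    then obtain a b where "E a b" "e = {a,b}" by blast
    then show ?thesis using nga_mult_at_edge[OF g \<open>E a b\<close>, of u v] u by simp
  next
    case False
    then show ?thesis by (rule nga_mult_off_edges)
  qed
  then show "u \<in> nga_ann V E" using u unfolding nga_ann_def by auto
qed

lemma rtranclp_alternating_product_eq:
  fixes f g :: "'v \<Rightarrow> 'a::comm_ring_1"
  assumes "E\<^sup>*\<^sup>* a b"
    and "\<And>x y. E x y \<Longrightarrow> f x + f y = 0" and "\<And>x y. E x y \<Longrightarrow> g x + g y = 0"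
  shows "f b * g b = f a * g a"
  using assms(1)
proof (induction rule: rtranclp_induct)
  case base
  then show ?case by simp
next
  case (step y z)
  have "f z = - f y" "g z = - g y"
    using assms(2,3)[OF step(2)] by (simp_all add: add_eq_0_iff2 add.commute)
  then show ?case using step.IH by simp
qed

definition bipartite_sign :: "'v set \<Rightarrow> 'v set \<Rightarrow> 'v \<Rightarrow> 'a::comm_ring_1" where
  "bipartite_sign X Y v = (if v \<in> X then 1 else if v \<in> Y then -1 else 0)"

lemma bipartite_sign_alternates:
  assumes "bipartite_parts V E X Y" "E a b"
  shows "bipartite_sign X Y a + bipartite_sign X Y b = 0"
  using assms unfolding bipartite_parts_def bipartite_sign_def by auto

lemma bipartite_sign_square:
  assumes "bipartite_parts V E X Y" "v \<in> V"
  shows "bipartite_sign X Y v * bipartite_sign X Y v = 1"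
  using assms unfolding bipartite_parts_def bipartite_sign_def by auto

lemma bipartite_sign_outside:
  assumes "bipartite_parts V E X Y" "v \<notin> V"
  shows "bipartite_sign X Y v = 0"
  using assms unfolding bipartite_parts_def bipartite_sign_def by auto

lemma bipartite_sign_eq_indicator_diff:
  assumes "finite X" "finite Y" "X \<inter> Y = {}"
  shows "(\<Sum>x\<in>X. if v = x then 1 else 0) - (\<Sum>y\<in>Y. if v = y then 1 else 0) =
         (bipartite_sign X Y v :: 'a::comm_ring_1)"
  using assms by (auto simp: bipartite_sign_def)

lemma alternating_eq_multiple_of_bipartite_sign:
  fixes u :: "'v \<Rightarrow> 'a::comm_ring_1"
  assumes conn: "graph_connected V E" and bip: "bipartite_parts V E X Y"
    and alt: "\<And>a b. E a b \<Longrightarrow> u a + u b = 0" and outside: "\<And>v. v \<notin> V \<Longrightarrow> u v = 0"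
  shows "\<exists>c. u = (\<lambda>v. c * bipartite_sign X Y v)"
proof -
  let ?s = "bipartite_sign X Y :: 'v \<Rightarrow> 'a"
  obtain v0 where v0: "v0 \<in> V" using conn unfolding graph_connected_def by auto
  have alt_sign: "?s a + ?s b = 0" if "E a b" for a b
    using bipartite_sign_alternates[OF bip that] .
  have "u w = u v0 * ?s v0 * ?s w" for w
  proof (cases "w \<in> V")
    case True
    then have "E\<^sup>*\<^sup>* v0 w" using conn v0 unfolding graph_connected_def by auto
    then have invariant: "u w * ?s w = u v0 * ?s v0"
      by (rule rtranclp_alternating_product_eq[OF _ alt alt_sign])
    have "?s w * ?s w = 1" by (rule bipartite_sign_square[OF bip True])
    then have "u w = u w * (?s w * ?s w)" by simp
    also have "\<dots> = u v0 * ?s v0 * ?s w" by (simp add: invariant flip: mult.assoc)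
    finally show ?thesis .
  next
    case False
    have "?s w = 0" by (rule bipartite_sign_outside[OF bip False])
    then show ?thesis using outside False by simp
  qed
  then show ?thesis by blast
qed

lemma nga_ann_connected_bipartite:
  assumes g: "simple_graph V E" and conn: "graph_connected V E" and bip: "bipartite_parts V E X Y"
  shows "(nga_ann V E :: ('v \<Rightarrow> 'a::field) set) = {(\<lambda>v. c * bipartite_sign X Y v) | c. True}"
proof (intro set_eqI iffI)
  fix u :: "'v \<Rightarrow> 'a"
  assume "u \<in> nga_ann V E"
  then have "u \<in> U_G V" "\<forall>a b. E a b \<longrightarrow> u a + u b = 0"
    using nga_ann_iff[OF g] by auto
  then have "\<exists>c. u = (\<lambda>v. c * bipartite_sign X Y v)"
    by (intro alternating_eq_multiple_of_bipartite_sign[OF conn bip]) (auto simp: U_G_def)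
  then show "u \<in> {(\<lambda>v. c * bipartite_sign X Y v) | c. True}" by blast
next
  fix u :: "'v \<Rightarrow> 'a"
  let ?s = "bipartite_sign X Y :: 'v \<Rightarrow> 'a"
  assume "u \<in> {(\<lambda>v. c * ?s v) | c. True}"
  then obtain c where u: "u = (\<lambda>v. c * ?s v)" by blast
  have "?s v = 0" if "v \<notin> V" for v using bipartite_sign_outside[OF bip that] .
  moreover have "?s a + ?s b = 0" if "E a b" for a b using bipartite_sign_alternates[OF bip that] .
  ultimately show "u \<in> nga_ann V E"
    unfolding nga_ann_iff[OF g] by (auto simp: u U_G_def simp flip: distrib_left)
qed

theorem corollary5p4:
  fixes V X Y :: "'v set" and E :: "'v \<Rightarrow> 'v \<Rightarrow> bool"
  assumes "simple_graph V E"
    and "graph_connected V E"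
    and "bipartite_parts V E X Y"
    and "(2::'a::field) \<noteq> 0"
  shows "(nga_ann V E :: ('v \<Rightarrow> 'a) set) =
         {(\<lambda>v. c * ((\<Sum>x\<in>X. if v = x then 1 else 0) - (\<Sum>y\<in>Y. if v = y then 1 else 0))) | c. True}"
proof -
  have "finite X" "finite Y" "X \<inter> Y = {}"
    using assms(1,3) unfolding simple_graph_def bipartite_parts_def by auto
  then have "(\<Sum>x\<in>X. if v = x then 1 else 0) - (\<Sum>y\<in>Y. if v = y then 1 else 0) =
             (bipartite_sign X Y v :: 'a)" for v
    by (rule bipartite_sign_eq_indicator_diff)
  then show ?thesis by (simp only: nga_ann_connected_bipartite[OF assms(1-3)])
qed

end
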